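(* Let $n\ge 3$ be odd and let $WC_n^d$ denote the fully whiskered $n$-cycle graph. Then $M_2(WC_n^d)\simeq S^{n-1}$.
   Context: The fully whiskered graph of a graph $G$ is obtained by attaching a leaf (a new vertex joined by one edge) to every vertex of $G$; $WC_n^d$ is the fully whiskered graph of the cycle on $n$ vertices. A $2$-matching of a graph is a set of edges such that every vertex has degree at most $2$ in it. $M_2(G)$ is the simplicial complex whose vertices are the edges of $G$ and whose faces are the $2$-matchings of $G$. *)

theory Defs
  imports "HOL-Analysis.Analysis"
begin

text \<open>Simple graphs are given by a set of edges; each edge is a 2-element set of vertices.\<close>

definition whiskered_cycle_edges :: "nat \<Rightarrow> nat set set" where
  "whiskered_cycle_edges n =
     {{i, (i + 1) mod n} | i. i < n} \<union> {{i, n + i} | i. i < n}"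

definition two_matching :: "'v set set \<Rightarrow> 'v set set \<Rightarrow> bool" where
  "two_matching E M \<longleftrightarrow> M \<subseteq> E \<and> (\<forall>v. card {e \<in> M. v \<in> e} \<le> 2)"

definition M2_complex :: "'v set set \<Rightarrow> 'v set set set" where
  "M2_complex E = {M. two_matching E M}"

text \<open>Geometric realization of an abstract simplicial complex K on the finite vertex set V:
  points are convex-combination weights on V whose support is a face of K, topologized as a
  subspace of the product topology.\<close>
definition geom_realization :: "'a set \<Rightarrow> 'a set set \<Rightarrow> ('a \<Rightarrow> real) topology" where
  "geom_realization V K = subtopology (powertop_real UNIV)
     {f. (\<forall>v. 0 \<le> f v) \<and> (\<forall>v. v \<notin> V \<longrightarrow> f v = 0) \<and> sum f V = 1 \<and> {v \<in> V. f v \<noteq> 0} \<in> K}"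

end

theory Submission
  imports Defs
begin

(*
  Write n = 2k + 1, c_i = {i, i + 1 mod n} for the cycle edges and w_i = {i, n + i} for the whiskers.
  A set of edges is a 2-matching iff it contains none of the triangles {c_(i-1), c_i, w_i}, so the
  realization of M_2 is the space of probability weights on the edges that vanish somewhere on every
  triangle. Such a space of weights with prescribed non-faces N deformation retracts onto the one with
  an extra non-face S: move the mass min_S f from every edge of S onto one edge t outside S, which is
  harmless as long as every non-face C through t can be traded for a non-face inside S u (C - {t}).
  Adding in this way the non-faces {c_(i-1), w_i} and {w_i} for the even vertices i > 0, and then
  {c_(n-1), w_0}, leaves the join of the k circles bounding the triangles at the odd vertices with the
  two points c_(n-1), w_0. This is a sphere of dimension 2k = n - 1, and the differences
  f(c_i) - f(w_j), where w_j lies in the same triangle or pair as c_i, are linear coordinates on the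
  cone over it.
*)

lemma continuous_map_Min:
  fixes g :: "'i \<Rightarrow> 'a \<Rightarrow> real"
  assumes "finite I" "I \<noteq> {}" "\<And>i. i \<in> I \<Longrightarrow> continuous_map X euclideanreal (g i)"
  shows "continuous_map X euclideanreal (\<lambda>x. MIN i\<in>I. g i x)"
  using assms
  by (induction I rule: finite_ne_induct) (simp_all add: continuous_map_real_min)

lemma homotopy_equivalent_space_straight_line_retract:
  fixes S S' :: "('a \<Rightarrow> real) set" and r :: "('a \<Rightarrow> real) \<Rightarrow> 'a \<Rightarrow> real"
  assumes "S' \<subseteq> S"
    and into: "\<And>f. f \<in> S \<Longrightarrow> r f \<in> S'"
    and fixed: "\<And>f. f \<in> S' \<Longrightarrow> r f = f"
    and cont: "\<And>v. continuous_map (subtopology (powertop_real UNIV) S) euclideanreal (\<lambda>f. r f v)"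
    and segment: "\<And>f u. f \<in> S \<Longrightarrow> 0 \<le> u \<Longrightarrow> u \<le> 1 \<Longrightarrow> (\<lambda>v. (1 - u) * r f v + u * f v) \<in> S"
  shows "subtopology (powertop_real UNIV) S homotopy_equivalent_space subtopology (powertop_real UNIV) S'"
proof (rule deformation_retraction_imp_homotopy_equivalent_space)
  let ?X = "subtopology (powertop_real UNIV) S"
  have "continuous_map ?X (powertop_real UNIV) r"
    using cont by (simp add: continuous_map_componentwise_UNIV)
  then show "retraction_maps ?X (subtopology (powertop_real UNIV) S') r id"
    using \<open>S' \<subseteq> S\<close> into fixed
    by (auto simp: retraction_maps_def continuous_map_in_subtopology
             intro!: continuous_map_from_subtopology)
  define h where "h = (\<lambda>(u::real, f) v. (1 - u) * r f v + u * f v)"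
  let ?T = "prod_topology (top_of_set {0..1}) ?X"
  have "continuous_map ?T euclideanreal (\<lambda>p. r (snd p) v)" for v
    using continuous_map_compose[OF continuous_map_snd cont] by (simp add: o_def)
  moreover have "continuous_map ?T euclideanreal (\<lambda>p. snd p v)" for v
    using continuous_map_compose[OF continuous_map_snd
        continuous_map_from_subtopology[OF continuous_map_product_projection[OF UNIV_I]]]
    by (simp add: o_def)
  moreover have "continuous_map ?T euclideanreal fst"
    by (metis continuous_map_fst continuous_map_into_fulltopology)
  ultimately have "continuous_map ?T (powertop_real UNIV) h"
    unfolding continuous_map_componentwise_UNIV h_def
    by (auto simp: case_prod_beta intro!: continuous_intros)
  then have "continuous_map ?T ?X h"
    using segment by (auto simp: continuous_map_in_subtopology h_def)
  then show "homotopic_with (\<lambda>x. True) ?X ?X (id \<circ> r) id"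
    unfolding homotopic_with_def by (intro exI[of _ h]) (auto simp: h_def)
qed

definition complex_avoiding :: "'a set \<Rightarrow> 'a set set \<Rightarrow> 'a set set" where
  "complex_avoiding V N = {F. F \<subseteq> V \<and> (\<forall>C\<in>N. \<not> C \<subseteq> F)}"

definition avoiding_cone :: "'a set \<Rightarrow> 'a set set \<Rightarrow> ('a \<Rightarrow> real) set" where
  "avoiding_cone V N = {f. (\<forall>v. 0 \<le> f v) \<and> (\<forall>v. v \<notin> V \<longrightarrow> f v = 0) \<and> (\<forall>C\<in>N. \<exists>e\<in>C. f e = 0)}"

lemma geom_realization_complex_avoiding:
  "geom_realization V (complex_avoiding V N) =
     subtopology (powertop_real UNIV) {f \<in> avoiding_cone V N. sum f V = 1}"
proof -
  have "{v \<in> V. f v \<noteq> 0} \<in> complex_avoiding V N \<longleftrightarrow> (\<forall>C\<in>N. \<exists>e\<in>C. f e = 0)"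
    if "\<forall>v. v \<notin> V \<longrightarrow> f v = 0" for f :: "'a \<Rightarrow> real"
    using that unfolding complex_avoiding_def by blast
  then have "{f. (\<forall>v. 0 \<le> f v) \<and> (\<forall>v. v \<notin> V \<longrightarrow> f v = 0) \<and> sum f V = 1 \<and>
               {v \<in> V. f v \<noteq> 0} \<in> complex_avoiding V N} = {f \<in> avoiding_cone V N. sum f V = 1}"
    unfolding avoiding_cone_def by blast
  then show ?thesis
    by (simp only: geom_realization_def)
qed

lemma avoiding_coneD:
  assumes "f \<in> avoiding_cone V N"
  shows "0 \<le> f v" "v \<notin> V \<Longrightarrow> f v = 0" "C \<in> N \<Longrightarrow> \<exists>e\<in>C. f e = 0"
  using assms by (auto simp: avoiding_cone_def)

lemma complex_avoiding_restrict:
  "complex_avoiding V N = complex_avoiding V {C \<in> N. C \<subseteq> V}"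
  by (auto simp: complex_avoiding_def)

lemma card_incident_le_2_iff_no_triple:
  assumes "finite M"
  shows "(\<forall>v. card {e \<in> M. v \<in> e} \<le> 2) \<longleftrightarrow>
         (\<forall>T \<subseteq> M. card T = 3 \<longrightarrow> \<not> (\<exists>v. \<forall>e\<in>T. v \<in> e))"
proof
  assume le_2: "\<forall>v. card {e \<in> M. v \<in> e} \<le> 2"
  show "\<forall>T \<subseteq> M. card T = 3 \<longrightarrow> \<not> (\<exists>v. \<forall>e\<in>T. v \<in> e)"
  proof (intro allI impI notI)
    fix T assume "T \<subseteq> M" "card T = 3" "\<exists>v. \<forall>e\<in>T. v \<in> e"
    then obtain v where "T \<subseteq> {e \<in> M. v \<in> e}" by blast
    then have "card T \<le> card {e \<in> M. v \<in> e}"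
      using assms by (intro card_mono) auto
    with le_2[rule_format, of v] \<open>card T = 3\<close> show False by linarith
  qed
next
  assume no_triple: "\<forall>T \<subseteq> M. card T = 3 \<longrightarrow> \<not> (\<exists>v. \<forall>e\<in>T. v \<in> e)"
  show "\<forall>v. card {e \<in> M. v \<in> e} \<le> 2"
  proof (rule ccontr)
    assume "\<not> (\<forall>v. card {e \<in> M. v \<in> e} \<le> 2)"
    then obtain v where "\<not> card {e \<in> M. v \<in> e} \<le> 2" by blast
    then have "3 \<le> card {e \<in> M. v \<in> e}" by linarith
    then obtain T where "T \<subseteq> {e \<in> M. v \<in> e}" "card T = 3"
      by (metis obtain_subset_with_card_n)
    with no_triple show False by blast
  qed
qed

lemma M2_complex_eq_complex_avoiding:
  assumes "finite E"
  shows "M2_complex E = complex_avoiding E {T. card T = 3 \<and> (\<exists>v. \<forall>e\<in>T. v \<in> e)}"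
proof -
  have "two_matching E M \<longleftrightarrow> M \<in> complex_avoiding E {T. card T = 3 \<and> (\<exists>v. \<forall>e\<in>T. v \<in> e)}"
    for M
  proof (cases "M \<subseteq> E")
    case True
    then have "finite M" using assms finite_subset by blast
    with True show ?thesis
      unfolding two_matching_def complex_avoiding_def card_incident_le_2_iff_no_triple[OF \<open>finite M\<close>]
      by blast
  qed (auto simp: two_matching_def complex_avoiding_def)
  then show ?thesis
    by (auto simp: M2_complex_def)
qed

lemma avoiding_cone_convex_combination:
  assumes "f \<in> avoiding_cone V N" "g \<in> avoiding_cone V N"
    and "\<And>C. C \<in> N \<Longrightarrow> \<exists>e\<in>C. f e = 0 \<and> g e = 0"
    and "0 \<le> u" "u \<le> 1"
  shows "(\<lambda>v. (1 - u) * g v + u * f v) \<in> avoiding_cone V N"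
proof -
  have "0 \<le> (1 - u) * g v + u * f v" for v
    using assms(1,2,4,5) unfolding avoiding_cone_def by (simp add: add_nonneg_nonneg)
  moreover have "\<exists>e\<in>C. (1 - u) * g e + u * f e = 0" if "C \<in> N" for C
    using assms(3)[OF that] by force
  ultimately show ?thesis
    using assms(1,2) by (simp add: avoiding_cone_def)
qed

definition transfer_min :: "'a set \<Rightarrow> 'a \<Rightarrow> ('a \<Rightarrow> real) \<Rightarrow> 'a \<Rightarrow> real" where
  "transfer_min S t f v = f v - (if v \<in> S then (MIN s\<in>S. f s) else 0)
                              + (if v = t then real (card S) * (MIN s\<in>S. f s) else 0)"

lemma sum_transfer_min:
  assumes "finite V" "S \<subseteq> V" "t \<in> V"
  shows "sum (transfer_min S t f) V = sum f V"
proof -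
  have "(\<Sum>v\<in>V. if v \<in> S then m else 0) = real (card S) * m" for m :: real
    using assms by (simp flip: sum.inter_restrict add: Int_absorb1)
  then show ?thesis
    using assms by (simp add: transfer_min_def sum.distrib sum_subtractf)
qed

lemma continuous_map_transfer_min:
  assumes "finite S" "S \<noteq> {}"
  shows "continuous_map (subtopology (powertop_real UNIV) X) euclideanreal (\<lambda>f. transfer_min S t f v)"
proof -
  have "continuous_map (subtopology (powertop_real UNIV) X) euclideanreal (\<lambda>f. MIN s\<in>S. f s)"
    using assms by (intro continuous_map_Min continuous_intros) auto
  then show ?thesis
    unfolding transfer_min_def by (intro continuous_intros) auto
qed

lemma transfer_min_away: "e \<notin> S \<Longrightarrow> e \<noteq> t \<Longrightarrow> transfer_min S t f e = f e"
  by (simp add: transfer_min_def)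

lemma transfer_min_eq_self:
  assumes "finite S" "\<And>v. 0 \<le> f v" "s \<in> S" "f s = 0"
  shows "transfer_min S t f = f"
proof -
  have "(MIN s\<in>S. f s) \<le> f s"
    using assms(1,3) by simp
  moreover have "0 \<le> (MIN s\<in>S. f s)"
    using assms(1-3) by (subst Min_ge_iff) auto
  ultimately have "(MIN s\<in>S. f s) = 0"
    using \<open>f s = 0\<close> by linarith
  then show ?thesis
    by (simp add: transfer_min_def fun_eq_iff)
qed

(* If f is positive on S, a non-face C on which f vanishes only at t is rescued by its exchange
   non-face D: the zero of f on D lies in C - {t}, where transfer_min does not change f. *)
lemma transfer_min_common_zero:
  assumes "finite S" and f: "f \<in> avoiding_cone V N" and C: "C \<in> N"
    and exchange: "\<And>C. C \<in> N \<Longrightarrow> t \<in> C \<Longrightarrow> \<exists>D\<in>N. D \<subseteq> S \<union> (C - {t})"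
  shows "\<exists>e\<in>C. f e = 0 \<and> transfer_min S t f e = 0"
proof -
  obtain e where e: "e \<in> C" "f e = 0"
    using f C unfolding avoiding_cone_def by blast
  show ?thesis
  proof (cases "\<exists>s\<in>S. f s = 0")
    case True
    with e show ?thesis
      using transfer_min_eq_self[OF \<open>finite S\<close> avoiding_coneD(1)[OF f]] by auto
  next
    case False
    show ?thesis
    proof (cases "e = t")
      case False
      with e \<open>\<not> (\<exists>s\<in>S. f s = 0)\<close> show ?thesis
        by (metis transfer_min_away)
    next
      case True
      then obtain D where "D \<in> N" "D \<subseteq> S \<union> (C - {t})"
        using exchange C e by blast
      moreover obtain d where "d \<in> D" "f d = 0"
        using f \<open>D \<in> N\<close> unfolding avoiding_cone_def by blast
      ultimately have "d \<in> C" "d \<notin> S" "d \<noteq> t" "f d = 0"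
        using False by auto
      then show ?thesis
        by (metis transfer_min_away)
    qed
  qed
qed

lemma transfer_min_in_avoiding_cone:
  assumes "finite S" "S \<noteq> {}" "S \<subseteq> V" "t \<in> V" "t \<notin> S"
    and exchange: "\<And>C. C \<in> N \<Longrightarrow> t \<in> C \<Longrightarrow> \<exists>D\<in>N. D \<subseteq> S \<union> (C - {t})"
    and f: "f \<in> avoiding_cone V N"
  shows "transfer_min S t f \<in> avoiding_cone V (insert S N)"
proof -
  have Min_nonneg: "0 \<le> (MIN s\<in>S. f s)"
    using f \<open>finite S\<close> \<open>S \<noteq> {}\<close> by (simp add: avoiding_cone_def)
  have "0 \<le> transfer_min S t f v" for v
    using f Min_nonneg \<open>finite S\<close> \<open>t \<notin> S\<close> unfolding transfer_min_def avoiding_cone_def by auto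
  moreover have "transfer_min S t f v = 0" if "v \<notin> V" for v
    using f that \<open>S \<subseteq> V\<close> \<open>t \<in> V\<close> transfer_min_away[of v S t f] by (auto simp: avoiding_cone_def)
  moreover have "\<exists>s\<in>S. transfer_min S t f s = 0"
  proof -
    have "(MIN s\<in>S. f s) \<in> f ` S"
      using \<open>finite S\<close> \<open>S \<noteq> {}\<close> by (intro Min_in) auto
    then show ?thesis
      using \<open>t \<notin> S\<close> by (force simp: transfer_min_def)
  qed
  moreover have "\<exists>e\<in>C. transfer_min S t f e = 0" if "C \<in> N" for C
    using transfer_min_common_zero[OF \<open>finite S\<close> f that exchange] by blast
  ultimately show ?thesis
    unfolding avoiding_cone_def by blast
qed

lemma homotopy_equivalent_space_complex_avoiding_insert:
  assumes "finite V" "S \<noteq> {}" "S \<subseteq> V" "t \<in> V" "t \<notin> S"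
    and exchange: "\<And>C. C \<in> N \<Longrightarrow> t \<in> C \<Longrightarrow> \<exists>D\<in>N. D \<subseteq> S \<union> (C - {t})"
  shows "geom_realization V (complex_avoiding V N) homotopy_equivalent_space
           geom_realization V (complex_avoiding V (insert S N))"
proof -
  define X where "X N' = {f \<in> avoiding_cone V N'. sum f V = 1}" for N'
  have "finite S"
    using assms finite_subset by blast
  have into: "transfer_min S t f \<in> X (insert S N)" if "f \<in> X N" for f
    using that transfer_min_in_avoiding_cone[OF \<open>finite S\<close> assms(2-6)]
      sum_transfer_min[OF \<open>finite V\<close> \<open>S \<subseteq> V\<close> \<open>t \<in> V\<close>]
    by (simp add: X_def)
  have fixed: "transfer_min S t f = f" if f: "f \<in> X (insert S N)" for f
  proof -
    obtain s where "s \<in> S" "f s = 0"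
      using f unfolding X_def avoiding_cone_def by blast
    moreover have "0 \<le> f v" for v
      using f by (simp add: X_def avoiding_cone_def)
    ultimately show ?thesis
      using transfer_min_eq_self[OF \<open>finite S\<close>] by blast
  qed
  have segment: "(\<lambda>v. (1 - u) * transfer_min S t f v + u * f v) \<in> X N"
    if "f \<in> X N" "0 \<le> u" "u \<le> 1" for f u
  proof -
    have "transfer_min S t f \<in> avoiding_cone V N" "sum (transfer_min S t f) V = 1"
      using into[OF that(1)] by (auto simp: X_def avoiding_cone_def)
    then show ?thesis
      using that transfer_min_common_zero[OF \<open>finite S\<close> _ _ exchange]
      by (auto simp: X_def sum.distrib avoiding_cone_convex_combination simp flip: sum_distrib_left)
  qed
  have "X (insert S N) \<subseteq> X N"
    by (auto simp: X_def avoiding_cone_def)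
  then show ?thesis
    unfolding geom_realization_complex_avoiding X_def[symmetric]
    using into fixed segment continuous_map_transfer_min[OF \<open>finite S\<close> \<open>S \<noteq> {}\<close>]
    by (intro homotopy_equivalent_space_straight_line_retract)
qed

lemma homotopy_equivalent_space_complex_avoiding_union:
  assumes "finite V" "finite A"
    and "\<And>a. a \<in> A \<Longrightarrow> S a \<noteq> {} \<and> S a \<subseteq> V \<and> t a \<in> V"
    and "\<And>a b. a \<in> A \<Longrightarrow> b \<in> A \<Longrightarrow> t a \<notin> S b"
    and "\<And>a C. a \<in> A \<Longrightarrow> C \<in> N \<Longrightarrow> t a \<in> C \<Longrightarrow> \<exists>D\<in>N. D \<subseteq> S a \<union> (C - {t a})"
  shows "geom_realization V (complex_avoiding V N) homotopy_equivalent_space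
           geom_realization V (complex_avoiding V (N \<union> S ` A))"
  using assms(2-)
proof (induction A rule: finite_induct)
  case empty
  then show ?case
    by (simp add: homotopy_equivalent_space_refl)
next
  case (insert a A)
  have "\<exists>D\<in>N \<union> S ` A. D \<subseteq> S a \<union> (C - {t a})" if C: "C \<in> N \<union> S ` A" "t a \<in> C" for C
  proof -
    have "C \<in> N"
      using C insert.prems(2)[of a] by blast
    then show ?thesis
      using C insert.prems(3)[of a C] by blast
  qed
  then have "geom_realization V (complex_avoiding V (N \<union> S ` A)) homotopy_equivalent_space
               geom_realization V (complex_avoiding V (insert (S a) (N \<union> S ` A)))"
    using \<open>finite V\<close> insert.prems(1)[of a] insert.prems(2)[of a a]
    by (intro homotopy_equivalent_space_complex_avoiding_insert) simp_all
  moreover have "geom_realization V (complex_avoiding V N) homotopy_equivalent_space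
                   geom_realization V (complex_avoiding V (N \<union> S ` A))"
    using insert.prems by (intro insert.IH) simp_all
  moreover have "N \<union> S ` insert a A = insert (S a) (N \<union> S ` A)"
    by auto
  ultimately show ?case
    by (metis homotopy_eqv_trans)
qed

(* Normalising a positively homogeneous homeomorphism Phi of the cone K onto the functions
   supported in {..d} gives a homeomorphism of the slice of mass 1 onto the unit sphere. *)
locale cone_chart =
  fixes V :: "'a set" and K :: "('a \<Rightarrow> real) set" and d :: nat
    and \<Phi> :: "('a \<Rightarrow> real) \<Rightarrow> nat \<Rightarrow> real" and \<Psi> :: "(nat \<Rightarrow> real) \<Rightarrow> 'a \<Rightarrow> real"
  assumes finite_V: "finite V"
    and nonneg: "\<And>f v. f \<in> K \<Longrightarrow> 0 \<le> f v"
    and support: "\<And>f v. f \<in> K \<Longrightarrow> v \<notin> V \<Longrightarrow> f v = 0"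
    and \<Psi>_in: "\<And>y. (\<forall>i>d. y i = 0) \<Longrightarrow> \<Psi> y \<in> K"
    and \<Phi>_vanishes: "\<And>f i. d < i \<Longrightarrow> \<Phi> f i = 0"
    and \<Psi>_\<Phi>: "\<And>f. f \<in> K \<Longrightarrow> \<Psi> (\<Phi> f) = f"
    and \<Phi>_\<Psi>: "\<And>y. (\<forall>i>d. y i = 0) \<Longrightarrow> \<Phi> (\<Psi> y) = y"
    and \<Phi>_divide: "\<And>f c. 0 < c \<Longrightarrow> \<Phi> (\<lambda>v. f v / c) = (\<lambda>i. \<Phi> f i / c)"
    and \<Psi>_divide: "\<And>y c. 0 < c \<Longrightarrow> \<Psi> (\<lambda>i. y i / c) = (\<lambda>v. \<Psi> y v / c)"
    and continuous_\<Phi>: "\<And>i. continuous_map (powertop_real UNIV) euclideanreal (\<lambda>f. \<Phi> f i)"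
    and continuous_\<Psi>: "\<And>v. continuous_map (powertop_real UNIV) euclideanreal (\<lambda>y. \<Psi> y v)"
begin

definition slice :: "('a \<Rightarrow> real) set" where
  "slice = {f \<in> K. sum f V = 1}"

definition sphere :: "(nat \<Rightarrow> real) set" where
  "sphere = {y. (\<Sum>i\<le>d. (y i)\<^sup>2) = 1 \<and> (\<forall>i>d. y i = 0)}"

definition chart_norm :: "('a \<Rightarrow> real) \<Rightarrow> real" where
  "chart_norm f = sqrt (\<Sum>i\<le>d. (\<Phi> f i)\<^sup>2)"

definition to_sphere :: "('a \<Rightarrow> real) \<Rightarrow> nat \<Rightarrow> real" where
  "to_sphere f = (\<lambda>i. \<Phi> f i / chart_norm f)"

definition from_sphere :: "(nat \<Rightarrow> real) \<Rightarrow> 'a \<Rightarrow> real" where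
  "from_sphere y = (\<lambda>v. \<Psi> y v / sum (\<Psi> y) V)"

lemma \<Phi>_zero: "\<Phi> (\<lambda>_. 0) = (\<lambda>_. 0)" and \<Psi>_zero: "\<Psi> (\<lambda>_. 0) = (\<lambda>_. 0)"
  using \<Phi>_divide[of 2 "\<lambda>_. 0"] \<Psi>_divide[of 2 "\<lambda>_. 0"] by (simp_all add: fun_eq_iff)

lemma chart_norm_pos: "f \<in> slice \<Longrightarrow> 0 < chart_norm f"
proof (rule ccontr)
  assume f: "f \<in> slice" and "\<not> 0 < chart_norm f"
  then have "(\<Sum>i\<le>d. (\<Phi> f i)\<^sup>2) = 0"
    unfolding chart_norm_def by (simp add: sum_nonneg order.antisym)
  then have "\<Phi> f i = 0" for i
    using \<Phi>_vanishes[of i f] by (cases "i \<le> d") (simp_all add: sum_nonneg_eq_0_iff)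
  then have "\<Phi> f = (\<lambda>_. 0)"
    by auto
  then have "f = (\<lambda>_. 0)"
    using \<Psi>_\<Phi>[of f] f \<Psi>_zero by (simp add: slice_def)
  with f show False
    by (simp add: slice_def)
qed

lemma mass_pos: "y \<in> sphere \<Longrightarrow> 0 < sum (\<Psi> y) V"
proof (rule ccontr)
  assume y: "y \<in> sphere" and "\<not> 0 < sum (\<Psi> y) V"
  have "\<Psi> y \<in> K"
    using y by (intro \<Psi>_in) (simp add: sphere_def)
  with \<open>\<not> 0 < sum (\<Psi> y) V\<close> have "sum (\<Psi> y) V = 0"
    using nonneg by (meson linorder_not_less order.antisym sum_nonneg)
  then have "\<Psi> y v = 0" if "v \<in> V" for v
    using finite_V nonneg[OF \<open>\<Psi> y \<in> K\<close>] that by (simp add: sum_nonneg_eq_0_iff)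
  then have "\<Psi> y = (\<lambda>_. 0)"
    using support[OF \<open>\<Psi> y \<in> K\<close>] by auto
  then have "y = (\<lambda>_. 0)"
    using \<Phi>_\<Psi>[of y] \<Phi>_zero y by (simp add: sphere_def)
  with y show False
    by (simp add: sphere_def)
qed

lemma to_sphere_in: "f \<in> slice \<Longrightarrow> to_sphere f \<in> sphere"
proof -
  assume f: "f \<in> slice"
  have "(\<Sum>i\<le>d. (to_sphere f i)\<^sup>2) = (\<Sum>i\<le>d. (\<Phi> f i)\<^sup>2) / (chart_norm f)\<^sup>2"
    by (simp add: to_sphere_def power_divide sum_divide_distrib)
  also have "\<dots> = 1"
    using chart_norm_pos[OF f] unfolding chart_norm_def by (simp add: sum_nonneg)
  finally show ?thesis
    by (simp add: sphere_def to_sphere_def \<Phi>_vanishes)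
qed

lemma from_sphere_in: "y \<in> sphere \<Longrightarrow> from_sphere y \<in> slice"
proof -
  assume y: "y \<in> sphere"
  have "from_sphere y = \<Psi> (\<lambda>i. y i / sum (\<Psi> y) V)"
    using mass_pos[OF y] by (simp add: from_sphere_def \<Psi>_divide)
  moreover have "\<Psi> (\<lambda>i. y i / sum (\<Psi> y) V) \<in> K"
    using y by (intro \<Psi>_in) (simp add: sphere_def)
  moreover have "sum (from_sphere y) V = 1"
    using mass_pos[OF y] by (simp add: from_sphere_def flip: sum_divide_distrib)
  ultimately show ?thesis
    by (simp add: slice_def)
qed

lemma from_sphere_to_sphere: "f \<in> slice \<Longrightarrow> from_sphere (to_sphere f) = f"
proof -
  assume f: "f \<in> slice"
  then have "\<Psi> (to_sphere f) = (\<lambda>v. f v / chart_norm f)"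
    using chart_norm_pos[OF f] by (simp add: to_sphere_def \<Psi>_divide \<Psi>_\<Phi> slice_def)
  then show ?thesis
    using chart_norm_pos[OF f] f by (simp add: from_sphere_def slice_def flip: sum_divide_distrib)
qed

lemma to_sphere_from_sphere: "y \<in> sphere \<Longrightarrow> to_sphere (from_sphere y) = y"
proof -
  assume y: "y \<in> sphere"
  let ?Z = "sum (\<Psi> y) V"
  have \<Phi>_from_sphere: "\<Phi> (from_sphere y) = (\<lambda>i. y i / ?Z)"
    using mass_pos[OF y] y by (simp add: from_sphere_def \<Phi>_divide \<Phi>_\<Psi> sphere_def)
  have "(\<Sum>i\<le>d. (y i / ?Z)\<^sup>2) = 1 / ?Z\<^sup>2"
    using y by (simp add: sphere_def power_divide flip: sum_divide_distrib)
  then have "chart_norm (from_sphere y) = 1 / ?Z"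
    using mass_pos[OF y] by (simp add: chart_norm_def \<Phi>_from_sphere real_sqrt_divide)
  then show ?thesis
    using mass_pos[OF y] by (simp add: to_sphere_def \<Phi>_from_sphere)
qed

lemma continuous_map_to_sphere:
  "continuous_map (subtopology (powertop_real UNIV) slice) (subtopology (powertop_real UNIV) sphere) to_sphere"
proof -
  have "continuous_map (powertop_real UNIV) euclideanreal chart_norm"
    unfolding chart_norm_def by (intro continuous_intros continuous_\<Phi>) simp
  then have "continuous_map (subtopology (powertop_real UNIV) slice) euclideanreal (\<lambda>f. to_sphere f i)" for i
    unfolding to_sphere_def using chart_norm_pos
    by (intro continuous_intros continuous_map_from_subtopology continuous_\<Phi>) (auto simp: less_le)
  then show ?thesis
    using to_sphere_in by (auto simp: continuous_map_in_subtopology continuous_map_componentwise_UNIV)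
qed

lemma continuous_map_from_sphere:
  "continuous_map (subtopology (powertop_real UNIV) sphere) (subtopology (powertop_real UNIV) slice) from_sphere"
proof -
  have "continuous_map (subtopology (powertop_real UNIV) sphere) euclideanreal (\<lambda>y. from_sphere y v)" for v
    unfolding from_sphere_def using mass_pos finite_V
    by (intro continuous_intros continuous_map_from_subtopology continuous_\<Psi>) (auto simp: less_le)
  then show ?thesis
    using from_sphere_in by (auto simp: continuous_map_in_subtopology continuous_map_componentwise_UNIV)
qed

theorem slice_homeomorphic_nsphere:
  "subtopology (powertop_real UNIV) {f \<in> K. sum f V = 1} homeomorphic_space nsphere d"
  unfolding nsphere slice_def[symmetric] sphere_def[symmetric] homeomorphic_space_def homeomorphic_maps_def
  using continuous_map_to_sphere continuous_map_from_sphere from_sphere_to_sphere to_sphere_from_sphere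
  by auto

end

locale whiskered_cycle =
  fixes n :: nat
  assumes three_le: "3 \<le> n"
begin

abbreviation E where "E \<equiv> whiskered_cycle_edges n"

definition cycle_edge :: "nat \<Rightarrow> nat set" where
  "cycle_edge i = {i, Suc i mod n}"

definition whisker :: "nat \<Rightarrow> nat set" where
  "whisker i = {i, n + i}"

definition prev :: "nat \<Rightarrow> nat" where
  "prev i = (if i = 0 then n - 1 else i - 1)"

definition triangle :: "nat \<Rightarrow> nat set set" where
  "triangle i = {cycle_edge (prev i), cycle_edge i, whisker i}"

abbreviation "triangles \<equiv> triangle ` {..<n}"

lemma edges_eq: "E = cycle_edge ` {..<n} \<union> whisker ` {..<n}"
  unfolding whiskered_cycle_edges_def cycle_edge_def whisker_def by auto

lemma finite_edges: "finite E"
  by (simp add: edges_eq)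

lemma cycle_edge_in_edges [simp]: "i < n \<Longrightarrow> cycle_edge i \<in> E"
  and whisker_in_edges [simp]: "i < n \<Longrightarrow> whisker i \<in> E"
  by (simp_all add: edges_eq)

lemma Suc_mod_eq: "i < n \<Longrightarrow> Suc i mod n = (if Suc i = n then 0 else Suc i)"
  by auto

lemma cycle_edge_eq_iff [simp]: "i < n \<Longrightarrow> j < n \<Longrightarrow> cycle_edge i = cycle_edge j \<longleftrightarrow> i = j"
  using three_le unfolding cycle_edge_def by (auto simp: Suc_mod_eq doubleton_eq_iff split: if_splits)

lemma whisker_eq_iff [simp]: "whisker i = whisker j \<longleftrightarrow> i = j"
  unfolding whisker_def by (auto simp: doubleton_eq_iff)

lemma cycle_edge_neq_whisker [simp]: "i < n \<Longrightarrow> cycle_edge i \<noteq> whisker j" "i < n \<Longrightarrow> whisker j \<noteq> cycle_edge i"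
proof -
  assume "i < n"
  then have "n + j \<notin> cycle_edge i"
    using three_le by (auto simp: cycle_edge_def Suc_mod_eq)
  then show "cycle_edge i \<noteq> whisker j" "whisker j \<noteq> cycle_edge i"
    by (auto simp: whisker_def)
qed

lemma prev_less [simp]: "i < n \<Longrightarrow> prev i < n"
  using three_le by (auto simp: prev_def)

lemma prev_neq [simp]: "i < n \<Longrightarrow> prev i \<noteq> i"
  using three_le by (auto simp: prev_def)

lemma prev_Suc_mod [simp]: "i < n \<Longrightarrow> prev (Suc i mod n) = i"
  by (auto simp: prev_def Suc_mod_eq)

lemma cycle_edge_prev: "i < n \<Longrightarrow> cycle_edge (prev i) = {prev i, i}"
  using three_le unfolding cycle_edge_def prev_def by (auto simp: Suc_mod_eq)

lemma edges_at_cycle_vertex: "i < n \<Longrightarrow> {e \<in> E. i \<in> e} = triangle i"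
proof -
  assume i: "i < n"
  have "e \<in> triangle i" if "e \<in> E" "i \<in> e" for e
  proof -
    from that(1) consider (cycle) j where "j < n" "e = cycle_edge j" | (whisker) j where "j < n" "e = whisker j"
      unfolding edges_eq by auto
    then show ?thesis
    proof cases
      case cycle
      then have "i = j \<or> i = Suc j mod n"
        using that(2) by (auto simp: cycle_edge_def)
      then show ?thesis
        using cycle i by (auto simp: triangle_def)
    next
      case whisker
      then show ?thesis
        using that(2) i by (auto simp: whisker_def triangle_def)
    qed
  qed
  moreover have "triangle i \<subseteq> E"
    using i by (simp add: triangle_def)
  moreover have "\<forall>e\<in>triangle i. i \<in> e"
    using i by (simp add: triangle_def cycle_edge_prev) (simp add: cycle_edge_def whisker_def)
  ultimately show ?thesis
    by blast
qed

lemma edges_at_leaf: "n \<le> v \<Longrightarrow> {e \<in> E. v \<in> e} \<subseteq> {whisker (v - n)}"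
  unfolding edges_eq by (auto simp: cycle_edge_def whisker_def Suc_mod_eq split: if_splits)

lemma card_triangle: "i < n \<Longrightarrow> card (triangle i) = 3"
  by (simp add: triangle_def)

lemma edge_triple_at_vertex_iff_triangle:
  assumes "T \<subseteq> E"
  shows "card T = 3 \<and> (\<exists>v. \<forall>e\<in>T. v \<in> e) \<longleftrightarrow> T \<in> triangles"
proof
  assume "card T = 3 \<and> (\<exists>v. \<forall>e\<in>T. v \<in> e)"
  then obtain v where T: "card T = 3" "T \<subseteq> {e \<in> E. v \<in> e}"
    using assms by auto
  show "T \<in> triangles"
  proof (cases "v < n")
    case True
    then have "T = triangle v"
      using T card_triangle[OF True] edges_at_cycle_vertex[OF True]
      by (intro card_subset_eq) (simp_all add: triangle_def)
    with True show ?thesis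
      by auto
  next
    case False
    then have "card T \<le> card {whisker (v - n)}"
      using T edges_at_leaf[of v] by (intro card_mono) auto
    with T show ?thesis
      by simp
  qed
next
  assume "T \<in> triangles"
  then obtain i where "i < n" "T = triangle i"
    by auto
  moreover have "\<forall>e\<in>triangle i. i \<in> e"
    using edges_at_cycle_vertex[OF \<open>i < n\<close>] by blast
  ultimately show "card T = 3 \<and> (\<exists>v. \<forall>e\<in>T. v \<in> e)"
    using card_triangle by auto
qed

lemma M2_complex_whiskered_cycle: "M2_complex E = complex_avoiding E triangles"
proof -
  have "{T \<in> {T. card T = 3 \<and> (\<exists>v. \<forall>e\<in>T. v \<in> e)}. T \<subseteq> E} = {T \<in> triangles. T \<subseteq> E}"
    using edge_triple_at_vertex_iff_triangle by blast
  then show ?thesis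
    unfolding M2_complex_eq_complex_avoiding[OF finite_edges]
    by (subst (1 2) complex_avoiding_restrict) (rule arg_cong)
qed

lemma whisker_in_triangle_iff: "i < n \<Longrightarrow> j < n \<Longrightarrow> whisker j \<in> triangle i \<longleftrightarrow> j = i"
  by (auto simp: triangle_def)

lemma cycle_edge_in_triangle_iff:
  "i < n \<Longrightarrow> j < n \<Longrightarrow> cycle_edge j \<in> triangle i \<longleftrightarrow> j = prev i \<or> j = i"
  by (auto simp: triangle_def)

definition edge_fun :: "(nat \<Rightarrow> real) \<Rightarrow> (nat \<Rightarrow> real) \<Rightarrow> nat set \<Rightarrow> real" where
  "edge_fun a b e = (\<Sum>i<n. if e = cycle_edge i then a i else 0) + (\<Sum>i<n. if e = whisker i then b i else 0)"

lemma edge_fun_cycle_edge [simp]: "i < n \<Longrightarrow> edge_fun a b (cycle_edge i) = a i"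
proof -
  assume i: "i < n"
  have "(\<Sum>j<n. if cycle_edge i = cycle_edge j then a j else 0) = (\<Sum>j<n. if i = j then a j else 0)"
    using i by (intro sum.cong) auto
  then show ?thesis
    using i by (simp add: edge_fun_def)
qed

lemma edge_fun_whisker [simp]: "i < n \<Longrightarrow> edge_fun a b (whisker i) = b i"
proof -
  assume i: "i < n"
  have "(\<Sum>j<n. if whisker i = cycle_edge j then a j else 0) = 0"
    by (intro sum.neutral) auto
  then show ?thesis
    using i by (simp add: edge_fun_def)
qed

lemma edge_fun_outside: "e \<notin> E \<Longrightarrow> edge_fun a b e = 0"
proof -
  assume "e \<notin> E"
  then have "e \<noteq> cycle_edge i" "e \<noteq> whisker i" if "i < n" for i
    using that by auto
  then have "(\<Sum>i<n. if e = cycle_edge i then a i else 0) = 0" "(\<Sum>i<n. if e = whisker i then b i else 0) = 0"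
    by (auto intro!: sum.neutral)
  then show ?thesis
    by (simp add: edge_fun_def)
qed

lemma edge_fun_nonneg:
  "(\<And>i. i < n \<Longrightarrow> 0 \<le> a i) \<Longrightarrow> (\<And>i. i < n \<Longrightarrow> 0 \<le> b i) \<Longrightarrow> 0 \<le> edge_fun a b e"
  unfolding edge_fun_def by (intro add_nonneg_nonneg sum_nonneg) auto

lemma edge_fun_divide: "edge_fun (\<lambda>i. a i / c) (\<lambda>i. b i / c) e = edge_fun a b e / c"
  by (simp add: edge_fun_def add_divide_distrib sum_divide_distrib if_distrib[of "\<lambda>x. x / c"] cong: if_cong)

lemma continuous_map_edge_fun:
  assumes "\<And>i. continuous_map X euclideanreal (\<lambda>y. a y i)" "\<And>i. continuous_map X euclideanreal (\<lambda>y. b y i)"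
  shows "continuous_map X euclideanreal (\<lambda>y. edge_fun (a y) (b y) e)"
proof -
  have "continuous_map X euclideanreal (\<lambda>y. if P then g y else 0)"
    if "continuous_map X euclideanreal g" for P and g :: "_ \<Rightarrow> real"
    using that by (cases P) simp_all
  then show ?thesis
    unfolding edge_fun_def using assms by (intro continuous_intros) auto
qed

end

locale odd_whiskered_cycle = whiskered_cycle +
  assumes odd_n: "odd n"
begin

definition hook :: "nat \<Rightarrow> nat set set" where
  "hook i = {cycle_edge (prev i), whisker i}"

definition even_vertices :: "nat set" where
  "even_vertices = {i. 0 < i \<and> i < n \<and> even i}"

abbreviation "hooks \<equiv> hook ` even_vertices"
abbreviation "even_whiskers \<equiv> (\<lambda>i. {whisker i}) ` even_vertices"
abbreviation "final_nonfaces \<equiv> insert (hook 0) (triangles \<union> hooks \<union> even_whiskers)"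

lemma finite_even_vertices: "finite even_vertices"
  by (simp add: even_vertices_def)

lemma hook_subset_edges: "i < n \<Longrightarrow> hook i \<subseteq> E"
  by (simp add: hook_def)

lemma Suc_mod_notin_even_vertices: "i \<in> even_vertices \<Longrightarrow> Suc i mod n \<notin> even_vertices"
  by (auto simp: even_vertices_def Suc_mod_eq)

lemma prev_even_vertex: "i \<in> even_vertices \<Longrightarrow> prev i = i - 1 \<and> odd (i - 1)"
  by (auto simp: even_vertices_def prev_def)

lemma homotopy_equivalent_adding_hooks:
  "geom_realization E (complex_avoiding E triangles) homotopy_equivalent_space
     geom_realization E (complex_avoiding E (triangles \<union> hooks))"
proof (rule homotopy_equivalent_space_complex_avoiding_union[where t = "\<lambda>i. whisker (Suc i mod n)"])
  fix a assume a: "a \<in> even_vertices"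
  then have "a < n"
    by (simp add: even_vertices_def)
  then show "hook a \<noteq> {} \<and> hook a \<subseteq> E \<and> whisker (Suc a mod n) \<in> E"
    using hook_subset_edges by (simp add: hook_def)
  show "whisker (Suc a mod n) \<notin> hook b" if "b \<in> even_vertices" for b
    using that a Suc_mod_notin_even_vertices[OF a] by (auto simp: hook_def even_vertices_def)
  fix C assume "C \<in> triangles" "whisker (Suc a mod n) \<in> C"
  then have "C = triangle (Suc a mod n)"
    using \<open>a < n\<close> whisker_in_triangle_iff by auto
  then have "triangle a \<subseteq> hook a \<union> (C - {whisker (Suc a mod n)})"
    using \<open>a < n\<close> by (auto simp: triangle_def hook_def)
  then show "\<exists>D\<in>triangles. D \<subseteq> hook a \<union> (C - {whisker (Suc a mod n)})"
    using \<open>a < n\<close> by blast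
qed (simp_all add: finite_edges finite_even_vertices)

lemma homotopy_equivalent_adding_even_whiskers:
  "geom_realization E (complex_avoiding E (triangles \<union> hooks)) homotopy_equivalent_space
     geom_realization E (complex_avoiding E (triangles \<union> hooks \<union> even_whiskers))"
proof (rule homotopy_equivalent_space_complex_avoiding_union[where t = "\<lambda>i. whisker (prev i)"])
  fix a assume a: "a \<in> even_vertices"
  then have "a < n"
    by (simp add: even_vertices_def)
  then show "{whisker a} \<noteq> {} \<and> {whisker a} \<subseteq> E \<and> whisker (prev a) \<in> E"
    by simp
  show "whisker (prev a) \<notin> {whisker b}" if "b \<in> even_vertices" for b
    using that prev_even_vertex[OF a] by (auto simp: even_vertices_def)
  fix C assume C: "C \<in> triangles \<union> hooks" "whisker (prev a) \<in> C"
  have "C \<notin> hooks"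
  proof
    assume "C \<in> hooks"
    then obtain b where "b \<in> even_vertices" "C = hook b"
      by blast
    with C(2) \<open>a < n\<close> have "prev a = b"
      by (auto simp: hook_def even_vertices_def)
    with \<open>b \<in> even_vertices\<close> prev_even_vertex[OF a] show False
      by (simp add: even_vertices_def)
  qed
  then have "C = triangle (prev a)"
    using C \<open>a < n\<close> whisker_in_triangle_iff by auto
  then have "hook a \<subseteq> {whisker a} \<union> (C - {whisker (prev a)})"
    using \<open>a < n\<close> by (auto simp: triangle_def hook_def)
  then show "\<exists>D\<in>triangles \<union> hooks. D \<subseteq> {whisker a} \<union> (C - {whisker (prev a)})"
    using a by blast
qed (simp_all add: finite_edges finite_even_vertices)

lemma nonface_through_cycle_edge_1:
  assumes C: "C \<in> triangles \<union> hooks \<union> even_whiskers" "cycle_edge 1 \<in> C"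
  shows "C = triangle 1 \<or> C = triangle 2 \<or> C = hook 2"
proof -
  have "1 < n"
    using three_le by simp
  have prev_eq_1: "prev j = 1 \<Longrightarrow> j = 2" for j
    using three_le by (auto simp: prev_def split: if_splits)
  consider (triangle) j where "j < n" "C = triangle j" | (hook) b where "b \<in> even_vertices" "C = hook b"
    | (whisker) b where "C = {whisker b}"
    using C(1) by blast
  then show ?thesis
  proof cases
    case triangle
    then have "1 = prev j \<or> 1 = j"
      using C(2) \<open>1 < n\<close> cycle_edge_in_triangle_iff by blast
    with triangle prev_eq_1 show ?thesis
      by metis
  next
    case hook
    then have "prev b = 1"
      using C(2) \<open>1 < n\<close> by (auto simp: hook_def even_vertices_def)
    with hook prev_eq_1 show ?thesis
      by metis
  next
    case whisker
    with C(2) \<open>1 < n\<close> show ?thesis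
      by simp
  qed
qed

lemma homotopy_equivalent_adding_hook_0:
  "geom_realization E (complex_avoiding E (triangles \<union> hooks \<union> even_whiskers)) homotopy_equivalent_space
     geom_realization E (complex_avoiding E final_nonfaces)"
proof (rule homotopy_equivalent_space_complex_avoiding_insert[where t = "cycle_edge 1"])
  have "1 < n" "prev 0 \<noteq> 1" "prev 1 = 0"
    using three_le by (auto simp: prev_def)
  then show "hook 0 \<noteq> {}" "hook 0 \<subseteq> E" "cycle_edge 1 \<in> E" "cycle_edge 1 \<notin> hook 0"
    using hook_subset_edges[of 0] by (auto simp: hook_def)
  have "2 \<in> even_vertices"
    using three_le odd_n by (auto simp: even_vertices_def)
  fix C assume C: "C \<in> triangles \<union> hooks \<union> even_whiskers" "cycle_edge 1 \<in> C"
  then consider "C = triangle 1" | "C = triangle 2" | "C = hook 2"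
    using nonface_through_cycle_edge_1 by blast
  then show "\<exists>D\<in>triangles \<union> hooks \<union> even_whiskers. D \<subseteq> hook 0 \<union> (C - {cycle_edge 1})"
  proof cases
    case 1
    have "cycle_edge 0 \<in> C" "cycle_edge 0 \<noteq> cycle_edge 1"
      using 1 \<open>prev 1 = 0\<close> \<open>1 < n\<close> by (simp_all add: triangle_def)
    then have "triangle 0 \<subseteq> hook 0 \<union> (C - {cycle_edge 1})"
      unfolding triangle_def hook_def by blast
    moreover have "triangle 0 \<in> triangles"
      using \<open>1 < n\<close> by simp
    ultimately show ?thesis
      by blast
  next
    case 2
    then have "whisker 2 \<in> C - {cycle_edge 1}"
      using \<open>1 < n\<close> by (simp add: triangle_def)
    then show ?thesis
      using \<open>2 \<in> even_vertices\<close> by blast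
  next
    case 3
    then have "whisker 2 \<in> C - {cycle_edge 1}"
      using \<open>1 < n\<close> by (simp add: hook_def)
    then show ?thesis
      using \<open>2 \<in> even_vertices\<close> by blast
  qed
qed (simp add: finite_edges)

(* w_(mate i) is the whisker in the same non-face as c_i: the triangle at mate i for odd mate i,
   hook 0 for i = n - 1. In the coordinates y_i = f(c_i) - f(w_(mate i)), a weight vanishing
   somewhere on {c_(j-1), c_j, w_j} has f(w_j) = max {0, - y_(j-1), - y_j}. *)
definition mate :: "nat \<Rightarrow> nat" where
  "mate i = (if even i then Suc i mod n else i)"

definition whisker_weight :: "(nat \<Rightarrow> real) \<Rightarrow> nat \<Rightarrow> real" where
  "whisker_weight y j =
     (if j = 0 then max 0 (- y (prev 0)) else if odd j then max 0 (max (- y (prev j)) (- y j)) else 0)"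

definition cycle_weight :: "(nat \<Rightarrow> real) \<Rightarrow> nat \<Rightarrow> real" where
  "cycle_weight y i = y i + whisker_weight y (mate i)"

definition chart :: "(nat set \<Rightarrow> real) \<Rightarrow> nat \<Rightarrow> real" where
  "chart f i = (if i < n then f (cycle_edge i) - f (whisker (mate i)) else 0)"

definition unchart :: "(nat \<Rightarrow> real) \<Rightarrow> nat set \<Rightarrow> real" where
  "unchart y = edge_fun (cycle_weight y) (whisker_weight y)"

lemma mate_less [simp]: "i < n \<Longrightarrow> mate i < n"
  by (simp add: mate_def)

lemma mate_prev_0 [simp]: "mate (prev 0) = 0"
  using three_le odd_n by (simp add: mate_def prev_def)

lemma mate_odd [simp]: "odd j \<Longrightarrow> j < n \<Longrightarrow> mate (prev j) = j" "odd j \<Longrightarrow> mate j = j"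
  using odd_n by (auto simp: mate_def prev_def Suc_mod_eq)

lemma mate_cases:
  assumes "i < n"
  obtains "mate i = 0" "i = prev 0" | "odd (mate i)" "i = prev (mate i) \<or> i = mate i"
proof (cases "even i")
  case True
  show ?thesis
  proof (cases "Suc i = n")
    case True
    then have "mate i = 0" "i = prev 0"
      using \<open>even i\<close> by (simp_all add: mate_def prev_def)
    with that(1) show ?thesis .
  next
    case False
    with \<open>even i\<close> \<open>i < n\<close> that(2) show ?thesis
      by (simp add: mate_def prev_def)
  qed
next
  case False
  with that(2) show ?thesis
    by (simp add: mate_def)
qed

lemma whisker_weight_nonneg: "0 \<le> whisker_weight y j"
  by (simp add: whisker_weight_def)

lemma cycle_weight_nonneg: "i < n \<Longrightarrow> 0 \<le> cycle_weight y i"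
proof -
  assume "i < n"
  then have "- y i \<le> whisker_weight y (mate i)"
    by (cases rule: mate_cases) (auto simp: whisker_weight_def)
  then show ?thesis
    by (simp add: cycle_weight_def)
qed

lemma weights_vanish_at_0: "cycle_weight y (prev 0) = 0 \<or> whisker_weight y 0 = 0"
  by (simp add: cycle_weight_def whisker_weight_def max_def)

lemma weights_vanish_at_odd:
  assumes "odd j" "j < n"
  shows "cycle_weight y (prev j) = 0 \<or> cycle_weight y j = 0 \<or> whisker_weight y j = 0"
proof -
  have "j \<noteq> 0"
    using \<open>odd j\<close> by presburger
  then have "whisker_weight y j = max 0 (max (- y (prev j)) (- y j))"
    using assms by (simp add: whisker_weight_def)
  then show ?thesis
    using assms by (simp add: cycle_weight_def max_def split: if_splits)
qed

lemma unchart_cycle_edge [simp]: "i < n \<Longrightarrow> unchart y (cycle_edge i) = cycle_weight y i"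
  and unchart_whisker [simp]: "i < n \<Longrightarrow> unchart y (whisker i) = whisker_weight y i"
  by (simp_all add: unchart_def)

lemma unchart_in_avoiding_cone: "unchart y \<in> avoiding_cone E final_nonfaces"
proof -
  have zero_0: "\<exists>e\<in>hook 0. unchart y e = 0" "\<exists>e\<in>triangle 0. unchart y e = 0"
    using weights_vanish_at_0[of y] three_le by (auto simp: hook_def triangle_def)
  have zero_even: "unchart y (whisker j) = 0" if "j \<in> even_vertices" for j
    using that by (auto simp: even_vertices_def whisker_weight_def)
  have "\<exists>e\<in>triangle j. unchart y e = 0" if "j < n" for j
  proof (cases "odd j")
    case True
    then show ?thesis
      using weights_vanish_at_odd[OF True that, of y] that by (auto simp: triangle_def)
  next
    case False
    then show ?thesis
      using zero_0(2) zero_even[of j] that by (cases "j = 0") (auto simp: even_vertices_def triangle_def)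
  qed
  moreover have "\<exists>e\<in>hook j. unchart y e = 0" "\<exists>e\<in>{whisker j}. unchart y e = 0" if "j \<in> even_vertices" for j
    using zero_even[OF that] by (auto simp: hook_def)
  moreover have "0 \<le> unchart y e" for e
    unfolding unchart_def by (intro edge_fun_nonneg cycle_weight_nonneg whisker_weight_nonneg)
  ultimately show ?thesis
    using zero_0(1) by (auto simp: avoiding_cone_def unchart_def edge_fun_outside)
qed

lemma chart_unchart:
  assumes "\<forall>i>n - 1. y i = 0"
  shows "chart (unchart y) = y"
proof
  fix i
  show "chart (unchart y) i = y i"
  proof (cases "i < n")
    case False
    then show ?thesis
      using assms three_le by (simp add: chart_def)
  qed (simp add: chart_def cycle_weight_def)
qed

lemma whisker_weight_chart:
  assumes f: "f \<in> avoiding_cone E final_nonfaces" and "j < n"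
  shows "whisker_weight (chart f) j = f (whisker j)"
proof -
  note nonneg = avoiding_coneD(1)[OF f]
  consider "j = 0" | "odd j" | "j \<in> even_vertices"
    using \<open>j < n\<close> by (auto simp: even_vertices_def)
  then show ?thesis
  proof cases
    case 1
    have "f (cycle_edge (prev 0)) = 0 \<or> f (whisker 0) = 0"
      using avoiding_coneD(3)[OF f, of "hook 0"] by (auto simp: hook_def)
    moreover have "whisker_weight (chart f) j = max 0 (f (whisker 0) - f (cycle_edge (prev 0)))"
      using 1 three_le by (simp add: whisker_weight_def chart_def)
    ultimately show ?thesis
      using 1 nonneg[of "whisker 0"] nonneg[of "cycle_edge (prev 0)"] by (auto simp: max_def)
  next
    case 2
    have "f (cycle_edge (prev j)) = 0 \<or> f (cycle_edge j) = 0 \<or> f (whisker j) = 0"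
      using avoiding_coneD(3)[OF f, of "triangle j"] \<open>j < n\<close> by (auto simp: triangle_def)
    moreover have "j \<noteq> 0"
      using 2 by presburger
    then have "whisker_weight (chart f) j =
        max 0 (max (f (whisker j) - f (cycle_edge (prev j))) (f (whisker j) - f (cycle_edge j)))"
      using 2 \<open>j < n\<close> by (simp add: whisker_weight_def chart_def)
    ultimately show ?thesis
      using nonneg[of "whisker j"] nonneg[of "cycle_edge j"] nonneg[of "cycle_edge (prev j)"]
      by (auto simp: max_def)
  next
    case 3
    then have "f (whisker j) = 0"
      using avoiding_coneD(3)[OF f, of "{whisker j}"] by auto
    with 3 show ?thesis
      by (auto simp: whisker_weight_def even_vertices_def)
  qed
qed

lemma unchart_chart:
  assumes f: "f \<in> avoiding_cone E final_nonfaces"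
  shows "unchart (chart f) = f"
proof
  fix e
  show "unchart (chart f) e = f e"
  proof (cases "e \<in> E")
    case True
    then consider (cycle) i where "i < n" "e = cycle_edge i" | (whisker) i where "i < n" "e = whisker i"
      unfolding edges_eq by auto
    then show ?thesis
    proof cases
      case cycle
      then show ?thesis
        using whisker_weight_chart[OF f] by (simp add: cycle_weight_def chart_def)
    next
      case whisker
      then show ?thesis
        using whisker_weight_chart[OF f] by simp
    qed
  next
    case False
    then show ?thesis
      using avoiding_coneD(2)[OF f] by (simp add: unchart_def edge_fun_outside)
  qed
qed

lemma unchart_divide: "0 < c \<Longrightarrow> unchart (\<lambda>i. y i / c) = (\<lambda>e. unchart y e / c)"
proof -
  assume "0 < c"
  then have "whisker_weight (\<lambda>i. y i / c) = (\<lambda>j. whisker_weight y j / c)"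
    by (simp add: fun_eq_iff whisker_weight_def max_divide_distrib_right)
  moreover from this have "cycle_weight (\<lambda>i. y i / c) = (\<lambda>i. cycle_weight y i / c)"
    by (simp add: fun_eq_iff cycle_weight_def add_divide_distrib)
  ultimately show ?thesis
    unfolding unchart_def by (simp only: edge_fun_divide[symmetric])
qed

lemma cone_chart_final_nonfaces: "cone_chart E (avoiding_cone E final_nonfaces) (n - 1) chart unchart"
proof
  show "finite E"
    by (rule finite_edges)
  show "0 \<le> f v" "v \<notin> E \<Longrightarrow> f v = 0" if "f \<in> avoiding_cone E final_nonfaces" for f v
    using that by (simp_all add: avoiding_coneD)
  show "unchart y \<in> avoiding_cone E final_nonfaces" for y
    by (rule unchart_in_avoiding_cone)
  show "chart f i = 0" if "n - 1 < i" for f i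
  proof -
    have "\<not> i < n"
      using that three_le by arith
    then show ?thesis
      by (simp add: chart_def)
  qed
  show "unchart (chart f) = f" if "f \<in> avoiding_cone E final_nonfaces" for f
    using that by (rule unchart_chart)
  show "chart (unchart y) = y" if "\<forall>i>n - 1. y i = 0" for y
    using that by (rule chart_unchart)
  show "chart (\<lambda>v. f v / c) = (\<lambda>i. chart f i / c)" for f and c :: real
    by (simp add: fun_eq_iff chart_def diff_divide_distrib)
  show "unchart (\<lambda>i. y i / c) = (\<lambda>v. unchart y v / c)" if "0 < c" for y c
    using that by (rule unchart_divide)
  show "continuous_map (powertop_real UNIV) euclideanreal (\<lambda>f. chart f i)" for i
    unfolding chart_def by (cases "i < n") (auto intro!: continuous_intros)
  have "continuous_map (powertop_real UNIV) euclideanreal (\<lambda>y. whisker_weight y j)" for j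
    unfolding whisker_weight_def by (cases "j = 0"; cases "odd j") (auto intro!: continuous_intros)
  then show "continuous_map (powertop_real UNIV) euclideanreal (\<lambda>y. unchart y v)" for v
    unfolding unchart_def cycle_weight_def
    by (intro continuous_map_edge_fun continuous_intros) auto
qed

lemma avoiding_final_nonfaces_homeomorphic_nsphere:
  "geom_realization E (complex_avoiding E final_nonfaces) homeomorphic_space nsphere (n - 1)"
  unfolding geom_realization_complex_avoiding
  by (rule cone_chart.slice_homeomorphic_nsphere[OF cone_chart_final_nonfaces])

theorem M2_complex_homotopy_equivalent_nsphere:
  "geom_realization E (M2_complex E) homotopy_equivalent_space nsphere (n - 1)"
proof -
  have "geom_realization E (M2_complex E) = geom_realization E (complex_avoiding E triangles)"
    by (simp only: M2_complex_whiskered_cycle)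
  also have "\<dots> homotopy_equivalent_space geom_realization E (complex_avoiding E (triangles \<union> hooks))"
    by (rule homotopy_equivalent_adding_hooks)
  also have "\<dots> homotopy_equivalent_space
               geom_realization E (complex_avoiding E (triangles \<union> hooks \<union> even_whiskers))"
    by (rule homotopy_equivalent_adding_even_whiskers)
  also have "\<dots> homotopy_equivalent_space geom_realization E (complex_avoiding E final_nonfaces)"
    by (rule homotopy_equivalent_adding_hook_0)
  also have "\<dots> homotopy_equivalent_space nsphere (n - 1)"
    by (rule homeomorphic_imp_homotopy_equivalent_space[OF avoiding_final_nonfaces_homeomorphic_nsphere])
  finally show ?thesis .
qed

end

theorem mainTheorem7:
  fixes n :: nat
  assumes "n \<ge> 3" and "odd n"
  shows "geom_realization (whiskered_cycle_edges n) (M2_complex (whiskered_cycle_edges n))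
           homotopy_equivalent_space nsphere (n - 1)"
proof -
  interpret odd_whiskered_cycle n
    using assms by unfold_locales
  show ?thesis
    by (rule M2_complex_homotopy_equivalent_nsphere)
qed

end
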